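(* Let $N$ be the five-point space with points $a,U,x,V,b$ whose open sets are exactly the subsets $S$ such that ($a\in S\Rightarrow U\in S$), ($x\in S\Rightarrow U,V\in S$) and ($b\in S\Rightarrow V\in S$). Let $M$ be the three-point space with points $a,w,b$ and open sets $\emptyset,\{w\},\{w,a\},\{w,b\},\{a,w,b\}$, and let $n:N\to M$ send $a\mapsto a$, $b\mapsto b$ and $U,x,V\mapsto w$. A topological space $X$ is normal (any two disjoint closed subsets have disjoint open neighbourhoods) iff $(\emptyset\to X)\rightthreetimes n$.
   Context: For morphisms $f:A\to B$ and $g:X\to Y$ in a category, write $f\rightthreetimes g$ ("$f$ has the left lifting property with respect to $g$") if for all morphisms $i:A\to X$, $j:B\to Y$ with $g\circ i=j\circ f$ there exists a morphism $h:B\to X$ with $h\circ f=i$ and $g\circ h=j$. "Normal" does not include any $T_1$ assumption. *)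

theory Defs
  imports "HOL-Analysis.Analysis"
begin

text \<open>A morphism A -> B is a function that is a continuous map
from A to B; equality of morphisms is equality on the underlying point set
(topspace) of the domain.\<close>

definition llp ::
  "'a topology \<Rightarrow> 'b topology \<Rightarrow> ('a \<Rightarrow> 'b) \<Rightarrow>
   'c topology \<Rightarrow> 'd topology \<Rightarrow> ('c \<Rightarrow> 'd) \<Rightarrow> bool" where
  "llp A B f X Y g \<longleftrightarrow>
     (\<forall>i j. continuous_map A X i \<and> continuous_map B Y j \<and>
            (\<forall>z\<in>topspace A. g (i z) = j (f z)) \<longrightarrow>
        (\<exists>h. continuous_map B X h \<and>
             (\<forall>z\<in>topspace A. h (f z) = i z) \<and>
             (\<forall>z\<in>topspace B. g (h z) = j z)))"

datatype ptN = Na | NU | Nx | NV | Nb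
datatype ptM = Ma | Mw | Mb

definition N_open :: "ptN set \<Rightarrow> bool" where
  "N_open S \<longleftrightarrow> (Na \<in> S \<longrightarrow> NU \<in> S) \<and> (Nx \<in> S \<longrightarrow> NU \<in> S \<and> NV \<in> S)
                 \<and> (Nb \<in> S \<longrightarrow> NV \<in> S)"

definition N_top :: "ptN topology" where
  "N_top = topology N_open"

definition M_open :: "ptM set \<Rightarrow> bool" where
  "M_open S \<longleftrightarrow> S \<in> {{}, {Mw}, {Mw, Ma}, {Mw, Mb}, {Ma, Mw, Mb}}"

definition M_top :: "ptM topology" where
  "M_top = topology M_open"

fun n_map :: "ptN \<Rightarrow> ptM" where
  "n_map Na = Ma"
| "n_map Nb = Mb"
| "n_map NU = Mw"
| "n_map Nx = Mw"
| "n_map NV = Mw"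

lemma istopology_N_open: "istopology N_open"
  unfolding istopology_def N_open_def by blast

lemma M_open_alt: "M_open S \<longleftrightarrow> (Ma \<in> S \<longrightarrow> Mw \<in> S) \<and> (Mb \<in> S \<longrightarrow> Mw \<in> S)"
proof -
  have S: "S = {z. z = Ma \<and> Ma \<in> S} \<union> {z. z = Mw \<and> Mw \<in> S} \<union> {z. z = Mb \<and> Mb \<in> S}"
    by auto (metis ptM.exhaust)+
  show ?thesis unfolding M_open_def
    by (subst S, cases "Ma \<in> S"; cases "Mw \<in> S"; cases "Mb \<in> S"; simp; blast)
qed

lemma istopology_M_open: "istopology M_open"
  unfolding istopology_def M_open_alt by blast

end

theory Submission
  imports Defs
begin

text \<open>Lifting along \<open>n\<close> against \<open>\<emptyset> \<rightarrow> X\<close> just says that every continuous \<open>j : X \<rightarrow> M\<close>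
factors as \<open>n \<circ> h\<close> with \<open>h : X \<rightarrow> N\<close> continuous. A continuous map to \<open>M\<close> is the same as a
pair of disjoint closed sets \<open>A = j\<^sup>-\<^sup>1 a\<close>, \<open>B = j\<^sup>-\<^sup>1 b\<close>. A lift \<open>h\<close> yields the disjoint open
neighbourhoods \<open>h\<^sup>-\<^sup>1 {a,U} \<supseteq> A\<close> and \<open>h\<^sup>-\<^sup>1 {b,V} \<supseteq> B\<close>; conversely, disjoint open
neighbourhoods \<open>U' \<supseteq> A\<close>, \<open>V' \<supseteq> B\<close> define a lift sending \<open>U' - A\<close> to \<open>U\<close>, \<open>V' - B\<close> to \<open>V\<close>
and the rest to \<open>x\<close>.\<close>

lemma llp_from_trivial_topology_iff:
  "llp (trivial_topology :: unit topology) X (\<lambda>_. undefined) Y Z g \<longleftrightarrow>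
     (\<forall>j. continuous_map X Z j \<longrightarrow>
        (\<exists>h. continuous_map X Y h \<and> (\<forall>z\<in>topspace X. g (h z) = j z)))"
  unfolding llp_def by simp

lemma openin_N_top: "openin N_top = N_open"
  by (simp add: N_top_def istopology_N_open)

lemma openin_M_top: "openin M_top = M_open"
  by (simp add: M_top_def istopology_M_open)

lemma topspace_N_top: "topspace N_top = UNIV"
proof -
  have "N_open UNIV" by (simp add: N_open_def)
  then show ?thesis unfolding topspace_def openin_N_top by blast
qed

lemma topspace_M_top: "topspace M_top = UNIV"
proof -
  have "M_open UNIV" by (simp add: M_open_alt)
  then show ?thesis unfolding topspace_def openin_M_top by blast
qed

lemma continuous_map_M_top_iff:
  "continuous_map X M_top j \<longleftrightarrow>
     closedin X {z \<in> topspace X. j z = Ma} \<and> closedin X {z \<in> topspace X. j z = Mb}"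
proof
  assume j: "continuous_map X M_top j"
  have "UNIV - {Ma} = {Mw, Mb}" "UNIV - {Mb} = {Ma, Mw}"
    by (auto; metis ptM.exhaust)+
  then have "closedin M_top {Ma}" "closedin M_top {Mb}"
    by (simp_all add: closedin_def topspace_M_top openin_M_top M_open_alt)
  then show "closedin X {z \<in> topspace X. j z = Ma} \<and> closedin X {z \<in> topspace X. j z = Mb}"
    using closedin_continuous_map_preimage[OF j, of "{Ma}"]
          closedin_continuous_map_preimage[OF j, of "{Mb}"] by simp
next
  assume closed: "closedin X {z \<in> topspace X. j z = Ma} \<and> closedin X {z \<in> topspace X. j z = Mb}"
  show "continuous_map X M_top j"
    unfolding continuous_map_def topspace_M_top openin_M_top
  proof safe
    fix S assume S: "M_open S"
    show "openin X {z \<in> topspace X. j z \<in> S}"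
    proof (cases "Mw \<in> S")
      case False
      with S have "S = {}"
        by (auto simp: M_open_alt) (metis ptM.exhaust)
      then show ?thesis by simp
    next
      case True
      then have "{z \<in> topspace X. j z \<in> S} =
          topspace X - {z \<in> topspace X. j z = Ma \<and> Ma \<notin> S}
                     - {z \<in> topspace X. j z = Mb \<and> Mb \<notin> S}"
        by (auto; metis ptM.exhaust)
      then show ?thesis
        using closed by (cases "Ma \<in> S"; cases "Mb \<in> S") auto
    qed
  qed auto
qed

fun N_star :: "ptN \<Rightarrow> ptN set" where
  "N_star Na = {Na, NU}"
| "N_star NU = {NU}"
| "N_star Nx = {Nx, NU, NV}"
| "N_star NV = {NV}"
| "N_star Nb = {Nb, NV}"

lemma N_star_subset: "N_open S \<Longrightarrow> p \<in> S \<Longrightarrow> N_star p \<subseteq> S"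
  by (cases p) (auto simp: N_open_def)

lemma mem_N_star: "p \<in> N_star p"
  by (cases p) auto

lemma continuous_map_N_topI:
  assumes "\<And>p. openin X {z \<in> topspace X. h z \<in> N_star p}"
  shows "continuous_map X N_top h"
  unfolding continuous_map_def topspace_N_top openin_N_top
proof safe
  fix S assume "N_open S"
  then have "{z \<in> topspace X. h z \<in> S} = (\<Union>p\<in>S. {z \<in> topspace X. h z \<in> N_star p})"
    using N_star_subset mem_N_star by blast
  then show "openin X {z \<in> topspace X. h z \<in> S}"
    using assms by auto
qed auto

lemma normal_space_lift_along_n_map:
  assumes normal: "normal_space X" and j: "continuous_map X M_top j"
  obtains h where "continuous_map X N_top h" "\<And>z. z \<in> topspace X \<Longrightarrow> n_map (h z) = j z"
proof -
  define A where "A = {z \<in> topspace X. j z = Ma}"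
  define B where "B = {z \<in> topspace X. j z = Mb}"
  have A: "closedin X A" and B: "closedin X B"
    using j by (simp_all add: continuous_map_M_top_iff A_def B_def)
  have "disjnt A B"
    by (auto simp: A_def B_def disjnt_def)
  then obtain U V where UV: "openin X U" "openin X V" "A \<subseteq> U" "B \<subseteq> V" "disjnt U V"
    using normal A B by (meson normal_space_def)
  have "U \<subseteq> topspace X" "V \<subseteq> topspace X"
    using UV by (simp_all add: openin_subset)
  define h where
    "h z = (if z \<in> A then Na else if z \<in> B then Nb
            else if z \<in> U then NU else if z \<in> V then NV else Nx)" for z
  have "openin X {z \<in> topspace X. h z \<in> N_star p}" for p
  proof -
    have "{z \<in> topspace X. h z \<in> N_star p} =
        (case p of Na \<Rightarrow> U | NU \<Rightarrow> U - A | Nx \<Rightarrow> topspace X - A - B | NV \<Rightarrow> V - B | Nb \<Rightarrow> V)"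
      using UV \<open>U \<subseteq> topspace X\<close> \<open>V \<subseteq> topspace X\<close>
      by (cases p) (auto simp: h_def disjnt_def)
    then show ?thesis
      using UV A B by (cases p) auto
  qed
  then have "continuous_map X N_top h"
    by (rule continuous_map_N_topI)
  moreover have "n_map (h z) = j z" if "z \<in> topspace X" for z
    using that by (cases "j z") (auto simp: h_def A_def B_def)
  ultimately show ?thesis
    by (rule that)
qed

lemma normal_space_if_lifts_along_n_map:
  assumes lift: "\<And>j. continuous_map X M_top j \<Longrightarrow>
                   \<exists>h. continuous_map X N_top h \<and> (\<forall>z\<in>topspace X. n_map (h z) = j z)"
  shows "normal_space X"
  unfolding normal_space_def
proof safe
  fix A B assume A: "closedin X A" and B: "closedin X B" and "disjnt A B"
  define j where "j z = (if z \<in> A then Ma else if z \<in> B then Mb else Mw)" for z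
  have "{z \<in> topspace X. j z = Ma} = A" "{z \<in> topspace X. j z = Mb} = B"
    using closedin_subset[OF A] closedin_subset[OF B] \<open>disjnt A B\<close>
    by (auto simp: j_def disjnt_def)
  then have "continuous_map X M_top j"
    using A B by (simp add: continuous_map_M_top_iff)
  then obtain h where h: "continuous_map X N_top h" "\<forall>z\<in>topspace X. n_map (h z) = j z"
    using lift by blast
  have "openin N_top {Na, NU}" "openin N_top {Nb, NV}"
    by (auto simp: openin_N_top N_open_def)
  then have "openin X {z \<in> topspace X. h z \<in> {Na, NU}}" "openin X {z \<in> topspace X. h z \<in> {Nb, NV}}"
    using openin_continuous_map_preimage[OF h(1)] by blast+
  moreover have "A \<subseteq> {z \<in> topspace X. h z \<in> {Na, NU}}"
  proof
    fix z assume "z \<in> A"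
    then have "z \<in> topspace X"
      using closedin_subset[OF A] by blast
    moreover from this \<open>z \<in> A\<close> have "n_map (h z) = Ma"
      using h(2) by (simp add: j_def)
    ultimately show "z \<in> {z \<in> topspace X. h z \<in> {Na, NU}}"
      by (cases "h z") auto
  qed
  moreover have "B \<subseteq> {z \<in> topspace X. h z \<in> {Nb, NV}}"
  proof
    fix z assume "z \<in> B"
    then have "z \<in> topspace X"
      using closedin_subset[OF B] by blast
    moreover from this \<open>z \<in> B\<close> have "n_map (h z) = Mb"
      using h(2) \<open>disjnt A B\<close> by (auto simp: j_def disjnt_def)
    ultimately show "z \<in> {z \<in> topspace X. h z \<in> {Nb, NV}}"
      by (cases "h z") auto
  qed
  moreover have "disjnt {z \<in> topspace X. h z \<in> {Na, NU}} {z \<in> topspace X. h z \<in> {Nb, NV}}"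
    by (auto simp: disjnt_def)
  ultimately show "\<exists>U V. openin X U \<and> openin X V \<and> A \<subseteq> U \<and> B \<subseteq> V \<and> disjnt U V"
    by blast
qed

theorem claim1:
  fixes X :: "'a topology"
  shows "normal_space X \<longleftrightarrow>
         llp (trivial_topology :: unit topology) X (\<lambda>_. undefined) N_top M_top n_map"
  unfolding llp_from_trivial_topology_iff
  using normal_space_lift_along_n_map normal_space_if_lifts_along_n_map by metis

end
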